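(* Let $Q_0,Q_1,Q_2\in\mathbb{S}^n$, $q_0,q_1,q_2\in\mathbb{R}^n$, $b_1,b_2\in\mathbb{R}$, and $A_i=\begin{pmatrix}0 & q_i^\top/2\\ q_i/2 & Q_i\end{pmatrix}$ for $i=0,1,2$. Let $\mathbf{V}_{\mathrm{opt}}=\inf\{\langle A_0,X\rangle: X\in\mathbb{S}^{n+1}_+,\ \operatorname{rank}(X)\le1,\ X_{11}=1,\ \langle A_i,X\rangle\le b_i,\ i=1,2\}$ (equal to the optimal value of $\min\{x^\top Q_0x+q_0^\top x: x^\top Q_ix+q_i^\top x\le b_i,\ i=1,2\}$) and $\mathbf{V}_{\mathrm{rel}}=\inf\{\langle A_0,X\rangle: X\in\mathbb{S}^{n+1}_+,\ X_{11}=1,\ \langle A_i,X\rangle\le b_i,\ i=1,2\}$. Suppose $\mathbf{V}_{\mathrm{rel}}$ is finite and the set of optimal solutions of the latter (relaxed) problem is bounded. If there is an optimal solution of the relaxed problem at which one of the two constraints $\langle A_i,X\rangle\le b_i$ ($i\in\{1,2\}$) is not binding, then $\mathbf{V}_{\mathrm{opt}}=\mathbf{V}_{\mathrm{rel}}$.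
   Context: $\langle A,X\rangle=\operatorname{tr}(A^\top X)$; $\mathbb{S}^n$ denotes symmetric $n\times n$ matrices and $\mathbb{S}^{n+1}_+$ positive semidefinite $(n+1)\times(n+1)$ matrices. A constraint $\langle A_i,X\rangle\le b_i$ is binding at $X$ if it holds with equality. *)

theory Defs
  imports "HOL-Analysis.Analysis" "HOL-Library.Extended_Real"
begin

definition frob :: "real^'m^'m \<Rightarrow> real^'m^'m \<Rightarrow> real" where
  "frob A X = trace (transpose A ** X)"

definition psd :: "real^'m^'m \<Rightarrow> bool" where
  "psd X \<longleftrightarrow> transpose X = X \<and> (\<forall>v. 0 \<le> v \<bullet> (X *v v))"

text \<open>The (n+1)x(n+1) matrix [[0, q^T/2],[q/2, Q]]; the extra first row/column
  is indexed by None, the others by Some j.\<close>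
definition liftA :: "real^'n^'n \<Rightarrow> real^'n \<Rightarrow> real^('n option)^('n option)" where
  "liftA Q q = (\<chi> i j. (case i of
        None \<Rightarrow> (case j of None \<Rightarrow> 0 | Some j' \<Rightarrow> q $ j' / 2)
      | Some i' \<Rightarrow> (case j of None \<Rightarrow> q $ i' / 2 | Some j' \<Rightarrow> Q $ i' $ j')))"

definition rel_feasible ::
  "real^('n::finite option)^('n option) \<Rightarrow> real^('n option)^('n option) \<Rightarrow> real \<Rightarrow> real
   \<Rightarrow> (real^('n option)^('n option)) set" where
  "rel_feasible A1 A2 b1 b2 =
     {X. psd X \<and> X $ None $ None = 1 \<and> frob A1 X \<le> b1 \<and> frob A2 X \<le> b2}"

definition opt_feasible ::
  "real^('n::finite option)^('n option) \<Rightarrow> real^('n option)^('n option) \<Rightarrow> real \<Rightarrow> real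
   \<Rightarrow> (real^('n option)^('n option)) set" where
  "opt_feasible A1 A2 b1 b2 = {X \<in> rel_feasible A1 A2 b1 b2. rank X \<le> 1}"

end

(*
  Let X0 be a minimiser, with optimal value V, of the relaxation at which the first constraint is
  slack. By convexity X0 stays a minimiser when that constraint is dropped. Writing the remaining
  constraint homogeneously as <A2 - b2 E11, X> <= 0, the Sturm--Zhang rotation argument
  decomposes X0 = sum w w^T with every w w^T satisfying it. Each normalised term is then feasible
  for the one-constraint problem, so <A0 - V E11, w w^T> >= 0 for every term; as these sum to
  zero, all vanish. Averaging the slack constraint gives a term with <A1 - b1 E11, w w^T> < 0. If
  the first entry of that w is nonzero, its normalisation is a rank-one minimiser of the
  relaxation; otherwise w w^T is a recession direction of the set of minimisers, contradicting
  boundedness.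
*)

theory Submission
  imports Defs
begin

definition outer :: "real^'m \<Rightarrow> real^'m^'m" where
  "outer v = (\<chi> i j. v$i * v$j)"

lemma outer_mult_vec: "outer v *v w = (v \<bullet> w) *\<^sub>R v"
  by (simp add: outer_def vec_eq_iff matrix_vector_mult_def inner_vec_def
      sum_distrib_left sum_distrib_right algebra_simps)

lemma transpose_outer [simp]: "transpose (outer v) = outer v"
  by (simp add: outer_def transpose_def vec_eq_iff mult.commute)

lemma outer_scaleR: "outer (c *\<^sub>R v) = c\<^sup>2 *\<^sub>R outer v"
  by (simp add: outer_def vec_eq_iff power2_eq_square algebra_simps)

lemma outer_rotation:
  "outer (c *\<^sub>R p + s *\<^sub>R q) + outer ((- s) *\<^sub>R p + c *\<^sub>R q)
    = (c\<^sup>2 + s\<^sup>2) *\<^sub>R (outer p + outer q)"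
  by (simp add: outer_def vec_eq_iff power2_eq_square algebra_simps)

lemma continuous_on_outer [continuous_intros]:
  "continuous_on S f \<Longrightarrow> continuous_on S (\<lambda>x. outer (f x))"
  unfolding outer_def by (intro continuous_intros)

lemma rank_outer_le_1: "rank (outer v) \<le> 1"
proof -
  have "range ((*v) (outer v)) \<subseteq> span {v}"
    by (auto simp: outer_mult_vec span_base span_scale)
  then have "dim (range ((*v) (outer v))) \<le> dim {v}"
    by (metis dim_span dim_subset)
  also have "\<dots> \<le> 1"
    using dim_le_card[of "{v}" "{v}"] by simp
  finally show ?thesis
    by (simp add: rank_dim_range)
qed

lemma psd_outer: "psd (outer v)"
  by (simp add: psd_def outer_mult_vec inner_commute)

lemma psd_add: "psd X \<Longrightarrow> psd Y \<Longrightarrow> psd (X + Y)"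
  by (simp add: psd_def matrix_vector_mult_add_rdistrib inner_add_right transpose_def vec_eq_iff)

lemma psd_scaleR: "psd X \<Longrightarrow> 0 \<le> c \<Longrightarrow> psd (c *\<^sub>R X)"
  by (simp add: psd_def scaleR_matrix_vector_assoc[symmetric] transpose_def vec_eq_iff)

lemma psd_cauchy_schwarz:
  assumes "psd X"
  shows "(u \<bullet> (X *v w))\<^sup>2 \<le> (u \<bullet> (X *v u)) * (w \<bullet> (X *v w))"
proof -
  define a b c where "a = w \<bullet> (X *v w)" and "b = u \<bullet> (X *v w)" and "c = u \<bullet> (X *v u)"
  have sym: "w \<bullet> (X *v u) = b"
    using assms unfolding psd_def b_def
    by (metis dot_lmul_matrix inner_commute transpose_matrix_vector)
  have quadratic: "0 \<le> c + 2 * t * b + t\<^sup>2 * a" for t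
  proof -
    have "0 \<le> (u + t *\<^sub>R w) \<bullet> (X *v (u + t *\<^sub>R w))"
      using assms by (simp add: psd_def)
    also have "\<dots> = c + 2 * t * b + t\<^sup>2 * a"
      using sym by (simp add: a_def b_def c_def algebra_simps inner_add_left inner_add_right
          power2_eq_square)
    finally show ?thesis .
  qed
  show ?thesis
  proof (cases "a = 0")
    case True
    have "b = 0"
    proof (rule ccontr)
      assume "b \<noteq> 0"
      then have "c + 2 * (- (c + 1) / (2 * b)) * b = -1"
        by (simp add: field_simps)
      then show False
        using quadratic[of "- (c + 1) / (2 * b)"] True by simp
    qed
    then show ?thesis
      using True by (simp add: a_def b_def c_def)
  next
    case False
    then have "a > 0"
      using assms by (simp add: psd_def a_def order_less_le)
    have "c + 2 * (- b / a) * b + (- b / a)\<^sup>2 * a = c - b\<^sup>2 / a"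
      using \<open>a > 0\<close> by (simp add: field_simps power2_eq_square)
    then have "b\<^sup>2 / a \<le> c"
      using quadratic[of "- b / a"] by simp
    then have "b\<^sup>2 \<le> c * a"
      using \<open>a > 0\<close> by (simp add: divide_le_eq)
    then show ?thesis
      by (simp add: a_def b_def c_def)
  qed
qed

lemma inner_axis_mult_axis: "axis i 1 \<bullet> (X *v axis j 1) = (X :: real^'m^'m) $ i $ j"
  by (simp add: matrix_vector_mult_basis column_def inner_axis')

lemma psd_diag_nonneg: "psd X \<Longrightarrow> 0 \<le> X $ i $ i"
  unfolding psd_def by (metis inner_axis_mult_axis)

lemma psd_entry_square_le: "psd X \<Longrightarrow> (X $ i $ j)\<^sup>2 \<le> X $ i $ i * X $ j $ j"
  using psd_cauchy_schwarz[of X "axis i 1" "axis j 1"] by (simp add: inner_axis_mult_axis)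

lemma psd_entry_eq_0_if_diag_eq_0: "psd X \<Longrightarrow> X $ i $ i = 0 \<Longrightarrow> X $ i $ j = 0"
  using psd_entry_square_le[of X i j] by simp

lemma psd_minus_outer_column:
  assumes X: "psd X" and d: "X $ j $ j > 0"
  defines "v \<equiv> (1 / sqrt (X $ j $ j)) *\<^sub>R (X *v axis j 1)"
  shows "psd (X - outer v)" and "(X - outer v) $ i $ i = X $ i $ i - (X $ i $ j)\<^sup>2 / X $ j $ j"
proof -
  have v: "v $ i = X $ i $ j / sqrt (X $ j $ j)" for i
    by (simp add: v_def matrix_vector_mult_basis column_def)
  show "(X - outer v) $ i $ i = X $ i $ i - (X $ i $ j)\<^sup>2 / X $ j $ j"
    using d by (simp add: outer_def v power2_eq_square real_sqrt_mult[symmetric])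
  have "0 \<le> w \<bullet> ((X - outer v) *v w)" for w
  proof -
    have "(v \<bullet> w)\<^sup>2 = (w \<bullet> (X *v axis j 1))\<^sup>2 / X $ j $ j"
      using d by (simp add: v_def inner_commute power_mult_distrib power_divide)
    also have "\<dots> \<le> w \<bullet> (X *v w)"
      using psd_cauchy_schwarz[OF X, of w "axis j 1"] d
      by (simp add: inner_axis_mult_axis divide_le_eq)
    finally show ?thesis
      by (simp add: matrix_vector_mult_diff_rdistrib outer_mult_vec inner_diff_right
          power2_eq_square inner_commute)
  qed
  moreover have "transpose (X - outer v) = X - outer v"
    using X by (simp add: psd_def transpose_def vec_eq_iff outer_def mult.commute)
  ultimately show "psd (X - outer v)"
    by (simp add: psd_def)
qed

lemma psd_eq_sum_list_outer:
  assumes "psd X"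
  shows "\<exists>vs. X = sum_list (map outer vs)"
  using assms
proof (induction "card {i. X $ i $ i \<noteq> 0}" arbitrary: X rule: less_induct)
  case less
  show ?case
  proof (cases "\<forall>i. X $ i $ i = 0")
    case True
    then have "X = 0"
      using psd_entry_eq_0_if_diag_eq_0[OF less.prems] by (simp add: vec_eq_iff)
    then show ?thesis
      by (metis list.map(1) sum_list.Nil)
  next
    case False
    then obtain j where "X $ j $ j \<noteq> 0"
      by blast
    then have d: "X $ j $ j > 0"
      using psd_diag_nonneg[OF less.prems] by (simp add: order_less_le)
    define v where "v = (1 / sqrt (X $ j $ j)) *\<^sub>R (X *v axis j 1)"
    note Y = psd_minus_outer_column[OF less.prems d, folded v_def]
    have "(X $ j $ j)\<^sup>2 / X $ j $ j = X $ j $ j"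
      using d by (simp add: power2_eq_square)
    then have support: "{i. (X - outer v) $ i $ i \<noteq> 0} \<subseteq> {i. X $ i $ i \<noteq> 0} - {j}"
      unfolding Y(2) using psd_entry_eq_0_if_diag_eq_0[OF less.prems] by auto
    have "card {i. (X - outer v) $ i $ i \<noteq> 0} \<le> card ({i. X $ i $ i \<noteq> 0} - {j})"
      using support by (intro card_mono) simp_all
    also have "\<dots> < card {i. X $ i $ i \<noteq> 0}"
      using \<open>X $ j $ j \<noteq> 0\<close> by (intro psubset_card_mono) auto
    finally have "card {i. (X - outer v) $ i $ i \<noteq> 0} < card {i. X $ i $ i \<noteq> 0}" .
    then obtain vs where "X - outer v = sum_list (map outer vs)"
      using less.hyps Y(1) by blast
    then have "X = sum_list (map outer (v # vs))"
      by (simp add: algebra_simps)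
    then show ?thesis ..
  qed
qed

lemma linear_frob: "linear (frob A)"
  by (rule linearI) (simp_all add: frob_def trace_def matrix_matrix_mult_def sum.distrib
      sum_distrib_left algebra_simps)

lemmas frob_add = linear_add[OF linear_frob]
  and frob_scaleR = linear_scale[OF linear_frob]
  and frob_zero = linear_0[OF linear_frob]

lemma linear_sum_list_map:
  "linear f \<Longrightarrow> f (sum_list (map g xs)) = sum_list (map (\<lambda>x. f (g x)) xs)"
  by (induction xs) (simp_all add: linear_0 linear_add)

lemma outer_rotation_vanishing:
  fixes f :: "real^'m^'m \<Rightarrow> real"
  assumes f: "linear f" and p: "0 \<le> f (outer p)" and q: "f (outer q) \<le> 0"
  obtains a b where "outer a + outer b = outer p + outer q" and "f (outer a) = 0"
proof -
  define h where "h t = f (outer (cos t *\<^sub>R p + sin t *\<^sub>R q))" for t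
  have "continuous_on {0..pi/2} (\<lambda>t. outer (cos t *\<^sub>R p + sin t *\<^sub>R q))"
    by (intro continuous_intros)
  then have "continuous_on {0..pi/2} h"
    unfolding h_def using f by (rule linear_continuous_on_compose)
  moreover have "h (pi/2) \<le> 0" and "0 \<le> h 0" and "0 \<le> pi/2"
    using p q by (simp_all add: h_def)
  ultimately obtain t where "h t = 0"
    using IVT2' by blast
  then show ?thesis
    using that[of "cos t *\<^sub>R p + sin t *\<^sub>R q" "(- sin t) *\<^sub>R p + cos t *\<^sub>R q"]
      outer_rotation[of "cos t" p "sin t" q] by (simp add: h_def)
qed

text \<open>Sturm--Zhang: a term on which f is positive and one on which it is negative are rotated
  into a term on which f vanishes and a remainder, reducing the number of terms with nonzero value.\<close>
lemma sum_list_outer_nonpos_decomposition: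
  fixes f :: "real^'m^'m \<Rightarrow> real"
  assumes f: "linear f" and "sum_list (map (\<lambda>v. f (outer v)) vs) \<le> 0"
  shows "\<exists>ws. sum_list (map outer ws) = sum_list (map outer vs)
    \<and> (\<forall>w\<in>set ws. f (outer w) \<le> 0)"
  using assms(2)
proof (induction "length (filter (\<lambda>v. f (outer v) \<noteq> 0) vs)" arbitrary: vs rule: less_induct)
  case less
  let ?g = "\<lambda>v. f (outer v)"
  let ?nonzero = "\<lambda>vs. length (filter (\<lambda>v. ?g v \<noteq> 0) vs)"
  have nonzero_remove1: "?nonzero xs = Suc (?nonzero (remove1 x xs))"
    if "x \<in> set xs" "?g x \<noteq> 0" for x xs
    using that length_pos_if_in_set[of x "filter (\<lambda>v. ?g v \<noteq> 0) xs"]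
    by (simp add: filter_remove1 length_remove1)
  show ?case
  proof (cases "\<forall>v\<in>set vs. ?g v \<le> 0")
    case True
    then show ?thesis
      by blast
  next
    case False
    then obtain p where p: "p \<in> set vs" "?g p > 0"
      by force
    define rest where "rest = remove1 p vs"
    have sum_p: "sum_list (map h vs) = h p + sum_list (map h rest)"
      for h :: "real^'m \<Rightarrow> 'b::comm_monoid_add"
      using p(1) unfolding rest_def by (rule sum_list_map_remove1)
    obtain q where q: "q \<in> set rest" "?g q < 0"
      using sum_list_nonneg[of "map ?g rest"] sum_p[of ?g] p(2) less.prems by force
    define rest' where "rest' = remove1 q rest"
    have sum_q: "sum_list (map h rest) = h q + sum_list (map h rest')"
      for h :: "real^'m \<Rightarrow> 'b::comm_monoid_add"
      using q(1) unfolding rest'_def by (rule sum_list_map_remove1)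
    obtain a b where ab: "outer a + outer b = outer p + outer q" "?g a = 0"
      using outer_rotation_vanishing[OF f] p(2) q(2) by (metis less_imp_le)
    have "?g a + ?g b = ?g p + ?g q"
      using arg_cong[OF ab(1), of f] f by (simp add: linear_add)
    then have "sum_list (map ?g (a # b # rest')) \<le> 0"
      using less.prems sum_p[of ?g] sum_q[of ?g] by simp
    moreover have "?nonzero (a # b # rest') < ?nonzero vs"
      using nonzero_remove1[OF p(1)] nonzero_remove1[OF q(1)] p(2) q(2) ab(2)
      unfolding rest_def rest'_def by simp
    ultimately obtain ws where "sum_list (map outer ws) = sum_list (map outer (a # b # rest'))"
        and "\<forall>w\<in>set ws. ?g w \<le> 0"
      using less.hyps by blast
    moreover have "sum_list (map outer (a # b # rest')) = sum_list (map outer vs)"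
      using sum_p[of outer] sum_q[of outer] ab(1) by (simp add: algebra_simps)
    ultimately show ?thesis
      by metis
  qed
qed

lemma psd_rank_one_decomposition:
  fixes f :: "real^'m^'m \<Rightarrow> real"
  assumes "linear f" "psd X" "f X \<le> 0"
  obtains ws where "X = sum_list (map outer ws)" and "\<forall>w\<in>set ws. f (outer w) \<le> 0"
  using psd_eq_sum_list_outer[OF assms(2)] sum_list_outer_nonpos_decomposition[OF assms(1)] assms
  by (metis linear_sum_list_map)

text \<open>\<open>homogenized A b X\<close> is \<open><A - b E11, X>\<close>; on matrices with \<open>X11 = 1\<close> the constraint
  \<open><A, X> \<le> b\<close> reads \<open>homogenized A b X \<le> 0\<close>.\<close>
definition homogenized ::
  "real^('n::finite option)^('n option) \<Rightarrow> real \<Rightarrow> real^('n option)^('n option) \<Rightarrow> real" where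
  "homogenized A b X = frob A X - b * X $ None $ None"

definition one_constraint_feasible ::
  "real^('n::finite option)^('n option) \<Rightarrow> real \<Rightarrow> (real^('n option)^('n option)) set" where
  "one_constraint_feasible A b = {X. psd X \<and> X $ None $ None = 1 \<and> frob A X \<le> b}"

lemma rel_feasible_eq_Int:
  "rel_feasible A1 A2 b1 b2 = one_constraint_feasible A1 b1 \<inter> one_constraint_feasible A2 b2"
  by (auto simp: rel_feasible_def one_constraint_feasible_def)

lemma linear_homogenized: "linear (homogenized A b)"
  by (rule linearI)
    (simp_all add: homogenized_def frob_add frob_scaleR algebra_simps)

lemma homogenized_le_0_iff: "X $ None $ None = 1 \<Longrightarrow> homogenized A b X \<le> 0 \<longleftrightarrow> frob A X \<le> b"
  by (simp add: homogenized_def)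

lemma homogenized_outer: "homogenized A b (outer w) = frob A (outer w) - b * (w $ None)\<^sup>2"
  by (simp add: homogenized_def outer_def power2_eq_square)

lemma outer_normalized:
  assumes "w $ None \<noteq> 0"
  shows "outer ((1 / w $ None) *\<^sub>R w) $ None $ None = 1"
    and "homogenized A b (outer ((1 / w $ None) *\<^sub>R w))
      = homogenized A b (outer w) / (w $ None)\<^sup>2"
  using assms by (simp_all add: outer_scaleR linear_scale[OF linear_homogenized] power_divide)
    (simp add: outer_def power2_eq_square)

lemma outer_normalized_mem_one_constraint_feasible:
  assumes "w $ None \<noteq> 0"
  shows "outer ((1 / w $ None) *\<^sub>R w) \<in> one_constraint_feasible A b
    \<longleftrightarrow> homogenized A b (outer w) \<le> 0"
proof -
  let ?z = "(1 / w $ None) *\<^sub>R w"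
  have "frob A (outer ?z) \<le> b \<longleftrightarrow> homogenized A b (outer ?z) \<le> 0"
    using homogenized_le_0_iff[OF outer_normalized(1)[OF assms]] by simp
  also have "\<dots> \<longleftrightarrow> homogenized A b (outer w) \<le> 0"
    using assms by (simp add: outer_normalized(2) divide_le_0_iff)
  finally show ?thesis
    using outer_normalized(1)[OF assms] by (simp add: one_constraint_feasible_def psd_outer)
qed

lemma convex_one_constraint_feasible: "convex (one_constraint_feasible A b)"
proof (rule convexI)
  fix X Y and u v :: real
  assume "X \<in> one_constraint_feasible A b" "Y \<in> one_constraint_feasible A b"
    and "0 \<le> u" "0 \<le> v" "u + v = 1"
  moreover from this have "u * frob A X + v * frob A Y \<le> u * b + v * b"
    by (intro add_mono mult_left_mono) (auto simp: one_constraint_feasible_def)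
  ultimately show "u *\<^sub>R X + v *\<^sub>R Y \<in> one_constraint_feasible A b"
    by (auto simp: one_constraint_feasible_def psd_add psd_scaleR frob_add
        frob_scaleR distrib_right[symmetric])
qed

text \<open>A slack constraint can be dropped: moving from the minimiser towards a better point of the
  larger feasible set by a small enough step keeps the slack constraint satisfied.\<close>
lemma minimizer_without_slack_constraint:
  assumes X0: "X0 \<in> rel_feasible A1 A2 b1 b2" and slack: "frob A1 X0 < b1"
    and min: "\<forall>X\<in>rel_feasible A1 A2 b1 b2. frob A0 X0 \<le> frob A0 X"
    and Y: "Y \<in> one_constraint_feasible A2 b2"
  shows "frob A0 X0 \<le> frob A0 Y"
proof (rule ccontr)
  assume "\<not> frob A0 X0 \<le> frob A0 Y"
  define a c where "a = frob A1 X0" and "c = frob A1 Y"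
  define t where "t = (b1 - a) / (\<bar>c - a\<bar> + (b1 - a))"
  define Z where "Z = (1 - t) *\<^sub>R X0 + t *\<^sub>R Y"
  have "b1 - a > 0"
    using slack by (simp add: a_def)
  then have t: "0 < t" "t \<le> 1"
    by (simp_all add: t_def)
  have frob_Z: "frob A Z = (1 - t) * frob A X0 + t * frob A Y" for A
    by (simp add: Z_def frob_add frob_scaleR)
  have "Z \<in> one_constraint_feasible A2 b2"
    unfolding Z_def using X0 Y t
    by (intro convexD[OF convex_one_constraint_feasible]) (auto simp: rel_feasible_eq_Int)
  moreover have "frob A1 Z \<le> b1"
  proof -
    have "t * (c - a) \<le> t * \<bar>c - a\<bar>"
      using t by (intro mult_left_mono) auto
    also have "\<dots> = (b1 - a) * (\<bar>c - a\<bar> / (\<bar>c - a\<bar> + (b1 - a)))"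
      by (simp add: t_def)
    also have "\<dots> \<le> b1 - a"
      using \<open>b1 - a > 0\<close> by (intro mult_left_le) simp_all
    finally show ?thesis
      by (simp add: frob_Z a_def c_def algebra_simps)
  qed
  ultimately have "Z \<in> rel_feasible A1 A2 b1 b2"
    by (simp add: rel_feasible_eq_Int one_constraint_feasible_def)
  then have "frob A0 X0 \<le> (1 - t) * frob A0 X0 + t * frob A0 Y"
    using min frob_Z by auto
  then show False
    using \<open>\<not> frob A0 X0 \<le> frob A0 Y\<close> t by (simp add: algebra_simps)
qed

lemma homogenized_outer_nonneg:
  assumes X0: "X0 \<in> one_constraint_feasible A2 b2"
    and min: "\<forall>Y\<in>one_constraint_feasible A2 b2. frob A0 X0 \<le> frob A0 Y"
    and w: "homogenized A2 b2 (outer w) \<le> 0"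
  shows "0 \<le> homogenized A0 (frob A0 X0) (outer w)"
proof (cases "w $ None = 0")
  case True
  then have hom: "homogenized A b (outer w) = frob A (outer w)" for A b
    by (simp add: homogenized_outer)
  have "outer w $ None $ None = 0"
    using True by (simp add: outer_def)
  then have "X0 + outer w \<in> one_constraint_feasible A2 b2"
    using X0 w by (auto simp: one_constraint_feasible_def hom psd_add psd_outer
        frob_add)
  then show ?thesis
    using min by (force simp: hom frob_add)
next
  case False
  let ?z = "(1 / w $ None) *\<^sub>R w"
  have "outer ?z \<in> one_constraint_feasible A2 b2"
    using False w by (simp add: outer_normalized_mem_one_constraint_feasible)
  then have "0 \<le> homogenized A0 (frob A0 X0) (outer ?z)"
    using min outer_normalized(1)[OF False] by (simp add: homogenized_def)
  then show ?thesis
    using False by (simp add: outer_normalized(2) zero_le_divide_iff)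
qed

lemma not_bounded_ray:
  fixes D :: "'a::real_normed_vector"
  assumes "D \<noteq> 0" and ray: "\<And>t. 0 \<le> t \<Longrightarrow> X + t *\<^sub>R D \<in> S"
  shows "\<not> bounded S"
proof
  assume "bounded S"
  then obtain M where M: "\<And>x. x \<in> S \<Longrightarrow> norm x \<le> M"
    by (auto simp: bounded_iff)
  define t where "t = (M + norm X + 1) / norm D"
  have "norm X \<le> M"
    using M ray[of 0] by simp
  then have "0 \<le> M"
    using norm_ge_zero order_trans by blast
  then have "0 \<le> t" and "norm (t *\<^sub>R D) = M + norm X + 1"
    using \<open>D \<noteq> 0\<close> by (simp_all add: t_def)
  moreover have "norm (t *\<^sub>R D) \<le> norm (X + t *\<^sub>R D) + norm X"
    using norm_triangle_ineq4[of "X + t *\<^sub>R D" X] by simp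
  ultimately show False
    using M[OF ray] by fastforce
qed

lemma rank_one_minimizer:
  fixes A0 A1 A2 :: "real^('n::finite option)^('n option)"
  assumes X0: "X0 \<in> rel_feasible A1 A2 b1 b2" and slack: "frob A1 X0 < b1"
    and min: "\<forall>X\<in>rel_feasible A1 A2 b1 b2. frob A0 X0 \<le> frob A0 X"
    and bounded: "bounded {X \<in> rel_feasible A1 A2 b1 b2. frob A0 X = frob A0 X0}"
  obtains z where "outer z \<in> rel_feasible A1 A2 b1 b2" and "frob A0 (outer z) = frob A0 X0"
proof -
  define V where "V = frob A0 X0"
  have X0_feasible: "X0 \<in> one_constraint_feasible A1 b1" "X0 \<in> one_constraint_feasible A2 b2"
    using X0 by (simp_all add: rel_feasible_eq_Int)
  then have X0_11: "X0 $ None $ None = 1"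
    by (simp add: one_constraint_feasible_def)
  obtain ws where ws: "X0 = sum_list (map outer ws)"
    and ws_A2: "\<forall>w\<in>set ws. homogenized A2 b2 (outer w) \<le> 0"
    using psd_rank_one_decomposition[OF linear_homogenized, of X0 A2 b2] X0_feasible(2)
    by (auto simp: one_constraint_feasible_def homogenized_le_0_iff)
  have sum_homogenized:
    "sum_list (map (\<lambda>w. homogenized A b (outer w)) ws) = homogenized A b X0" for A b
    using linear_sum_list_map[OF linear_homogenized] ws by metis
  have "\<forall>w\<in>set ws. 0 \<le> homogenized A0 V (outer w)"
    using homogenized_outer_nonneg[OF X0_feasible(2)] ws_A2
      minimizer_without_slack_constraint[OF X0 slack min] by (simp add: V_def)
  moreover have "sum_list (map (\<lambda>w. homogenized A0 V (outer w)) ws) = 0"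
    unfolding sum_homogenized using X0_11 by (simp add: homogenized_def V_def)
  ultimately have A0_tight: "\<forall>w\<in>set ws. homogenized A0 V (outer w) = 0"
    using sum_list_nonneg_eq_0_iff[of "map (\<lambda>w. homogenized A0 V (outer w)) ws"] by auto
  have "sum_list (map (\<lambda>w. homogenized A1 b1 (outer w)) ws) < 0"
    unfolding sum_homogenized using X0_11 slack by (simp add: homogenized_def)
  then obtain w where w: "w \<in> set ws" and w_A1: "homogenized A1 b1 (outer w) < 0"
    using sum_list_nonneg[of "map (\<lambda>w. homogenized A1 b1 (outer w)) ws"] by force
  show ?thesis
  proof (cases "w $ None = 0")
    case False
    let ?z = "(1 / w $ None) *\<^sub>R w"
    have "homogenized A0 V (outer ?z) = 0"
      using A0_tight w by (simp add: outer_normalized(2)[OF False])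
    then have "frob A0 (outer ?z) = V"
      using outer_normalized(1)[OF False] by (simp add: homogenized_def)
    moreover have "outer ?z \<in> rel_feasible A1 A2 b1 b2"
      using False w w_A1 ws_A2
      by (simp add: rel_feasible_eq_Int outer_normalized_mem_one_constraint_feasible)
    ultimately show ?thesis
      using that V_def by blast
  next
    case True
    \<comment> \<open>then \<open>outer w\<close> is a recession direction of the set of minimisers\<close>
    then have hom: "homogenized A b (outer w) = frob A (outer w)" for A b
      by (simp add: homogenized_outer)
    have "outer w $ None $ None = 0"
      using True by (simp add: outer_def)
    have D: "frob A0 (outer w) = 0" "frob A1 (outer w) \<le> 0" "frob A2 (outer w) \<le> 0"
      using A0_tight[rule_format, OF w] ws_A2[rule_format, OF w] w_A1 unfolding hom by auto
    have "X0 + t *\<^sub>R outer w \<in> {X \<in> rel_feasible A1 A2 b1 b2. frob A0 X = V}" if "0 \<le> t" for t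
    proof -
      have "t * frob A (outer w) \<le> 0" if "frob A (outer w) \<le> 0" for A
        using \<open>0 \<le> t\<close> that by (rule mult_nonneg_nonpos)
      then show ?thesis
        using X0 \<open>0 \<le> t\<close> \<open>outer w $ None $ None = 0\<close> D
        by (fastforce simp: rel_feasible_def V_def psd_add psd_scaleR psd_outer
            frob_add frob_scaleR)
    qed
    moreover have "outer w \<noteq> 0"
      using w_A1 unfolding hom by (auto simp: frob_zero)
    ultimately show ?thesis
      using not_bounded_ray bounded V_def by blast
  qed
qed

theorem corollary9:
  fixes Q0 Q1 Q2 :: "real^'n::finite^'n" and q0 q1 q2 :: "real^'n" and b1 b2 :: real
  assumes "transpose Q0 = Q0" "transpose Q1 = Q1" "transpose Q2 = Q2"
  defines "A0 \<equiv> liftA Q0 q0" and "A1 \<equiv> liftA Q1 q1" and "A2 \<equiv> liftA Q2 q2"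
  defines "Vopt \<equiv> (INF X\<in>opt_feasible A1 A2 b1 b2. ereal (frob A0 X))"
      and "Vrel \<equiv> (INF X\<in>rel_feasible A1 A2 b1 b2. ereal (frob A0 X))"
  assumes "\<bar>Vrel\<bar> \<noteq> \<infinity>"
      and "bounded {X \<in> rel_feasible A1 A2 b1 b2. ereal (frob A0 X) = Vrel}"
      and "\<exists>X \<in> rel_feasible A1 A2 b1 b2. ereal (frob A0 X) = Vrel \<and>
             (frob A1 X < b1 \<or> frob A2 X < b2)"
  shows "Vopt = Vrel"
proof -
  \<comment> \<open>The argument works for arbitrary A0, A1, A2.\<close>
  obtain X0 where X0: "X0 \<in> rel_feasible A1 A2 b1 b2" "Vrel = ereal (frob A0 X0)"
    and slack: "frob A1 X0 < b1 \<or> frob A2 X0 < b2"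
    using assms(11) by metis
  have min: "\<forall>X\<in>rel_feasible A1 A2 b1 b2. frob A0 X0 \<le> frob A0 X"
    using X0(2) INF_lower[of _ "rel_feasible A1 A2 b1 b2" "\<lambda>X. ereal (frob A0 X)"]
    unfolding Vrel_def by simp
  have bounded: "bounded {X \<in> rel_feasible A1 A2 b1 b2. frob A0 X = frob A0 X0}"
    using assms(10) X0(2) by simp
  obtain z where z: "outer z \<in> rel_feasible A1 A2 b1 b2" "frob A0 (outer z) = frob A0 X0"
    using slack rank_one_minimizer[OF X0(1) _ min bounded]
      rank_one_minimizer[of X0 A2 A1 b2 b1 A0] X0(1) min bounded
    by (auto simp: rel_feasible_eq_Int Int_commute)
  then have "outer z \<in> opt_feasible A1 A2 b1 b2"
    using rank_outer_le_1 by (simp add: opt_feasible_def)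
  then have "Vopt \<le> Vrel"
    unfolding Vopt_def using X0(2) z(2) by (metis INF_lower)
  moreover have "Vrel \<le> Vopt"
    unfolding Vrel_def Vopt_def by (rule INF_superset_mono) (auto simp: opt_feasible_def)
  ultimately show ?thesis
    by simp
qed

end
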